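(* Every commutative ring $A$ which is a principal ideal domain is a BL-ring.
   Context: For a commutative unitary ring $A$, its ideals $Id(A)$ form a residuated lattice $(Id(A),\cap,+,\otimes,\rightarrow,\{0\},A)$, ordered by inclusion, where $I+J$ is the ideal sum, $I\otimes J$ the ideal product, and $I\rightarrow J=(J:I)=\{x\in A: xI\subseteq J\}$. A BL-algebra is a residuated lattice satisfying prelinearity $(x\rightarrow y)\vee(y\rightarrow x)=1$ and divisibility $x\odot(x\rightarrow y)=x\wedge y$. A BL-ring is a commutative unitary ring whose lattice of ideals, with the structure above, is a BL-algebra. *)

theory Defs
  imports "HOL-Algebra.Ideal_Product" "HOL-Algebra.Ring_Divisibility"
begin

definition residuated_lattice ::
  "'a set \<Rightarrow> ('a \<Rightarrow> 'a \<Rightarrow> bool) \<Rightarrow> ('a \<Rightarrow> 'a \<Rightarrow> 'a) \<Rightarrow> ('a \<Rightarrow> 'a \<Rightarrow> 'a) \<Rightarrow>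
   ('a \<Rightarrow> 'a \<Rightarrow> 'a) \<Rightarrow> ('a \<Rightarrow> 'a \<Rightarrow> 'a) \<Rightarrow> 'a \<Rightarrow> 'a \<Rightarrow> bool" where
  "residuated_lattice L leq mt jn pr rs bt tp \<longleftrightarrow>
     bt \<in> L \<and> tp \<in> L \<and>
     (\<forall>x\<in>L. \<forall>y\<in>L. mt x y \<in> L \<and> jn x y \<in> L \<and> pr x y \<in> L \<and> rs x y \<in> L) \<and>
     (\<forall>x\<in>L. leq x x) \<and>
     (\<forall>x\<in>L. \<forall>y\<in>L. leq x y \<and> leq y x \<longrightarrow> x = y) \<and>
     (\<forall>x\<in>L. \<forall>y\<in>L. \<forall>z\<in>L. leq x y \<and> leq y z \<longrightarrow> leq x z) \<and>
     (\<forall>x\<in>L. \<forall>y\<in>L. leq (mt x y) x \<and> leq (mt x y) y \<and>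
        (\<forall>z\<in>L. leq z x \<and> leq z y \<longrightarrow> leq z (mt x y))) \<and>
     (\<forall>x\<in>L. \<forall>y\<in>L. leq x (jn x y) \<and> leq y (jn x y) \<and>
        (\<forall>z\<in>L. leq x z \<and> leq y z \<longrightarrow> leq (jn x y) z)) \<and>
     (\<forall>x\<in>L. leq bt x \<and> leq x tp) \<and>
     (\<forall>x\<in>L. \<forall>y\<in>L. \<forall>z\<in>L. pr (pr x y) z = pr x (pr y z)) \<and>
     (\<forall>x\<in>L. \<forall>y\<in>L. pr x y = pr y x) \<and>
     (\<forall>x\<in>L. pr tp x = x) \<and>
     (\<forall>x\<in>L. \<forall>y\<in>L. \<forall>z\<in>L. leq (pr x y) z \<longleftrightarrow> leq x (rs y z))"

definition BL_algebra ::
  "'a set \<Rightarrow> ('a \<Rightarrow> 'a \<Rightarrow> bool) \<Rightarrow> ('a \<Rightarrow> 'a \<Rightarrow> 'a) \<Rightarrow> ('a \<Rightarrow> 'a \<Rightarrow> 'a) \<Rightarrow>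
   ('a \<Rightarrow> 'a \<Rightarrow> 'a) \<Rightarrow> ('a \<Rightarrow> 'a \<Rightarrow> 'a) \<Rightarrow> 'a \<Rightarrow> 'a \<Rightarrow> bool" where
  "BL_algebra L leq mt jn pr rs bt tp \<longleftrightarrow>
     residuated_lattice L leq mt jn pr rs bt tp \<and>
     (\<forall>x\<in>L. \<forall>y\<in>L. jn (rs x y) (rs y x) = tp) \<and>
     (\<forall>x\<in>L. \<forall>y\<in>L. pr x (rs x y) = mt x y)"

text \<open>Ideal quotient (J : I) = {x. x I \<subseteq> J}.\<close>
definition ideal_residual :: "('a, 'b) ring_scheme \<Rightarrow> 'a set \<Rightarrow> 'a set \<Rightarrow> 'a set" where
  "ideal_residual R I J = {x \<in> carrier R. \<forall>i\<in>I. x \<otimes>\<^bsub>R\<^esub> i \<in> J}"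

definition BL_ring :: "('a, 'b) ring_scheme \<Rightarrow> bool" where
  "BL_ring R \<longleftrightarrow> cring R \<and>
     BL_algebra {I. ideal I R} (\<subseteq>) (\<inter>) (set_add R) (ideal_prod R)
       (\<lambda>I J. ideal_residual R I J) {\<zero>\<^bsub>R\<^esub>} (carrier R)"

end

theory Submission
  imports Defs
begin

text \<open>The ideals of any commutative ring form a residuated lattice; only prelinearity and
  divisibility need principal ideals. Divisibility: if \<open>I = (a)\<close> and \<open>r a \<in> J\<close>, then
  \<open>r \<in> (J : I)\<close>, so \<open>r a \<in> I (J : I)\<close>. Prelinearity: write \<open>I + J = (d)\<close>, \<open>I = (a' d)\<close> and
  \<open>J = (b' d)\<close>. If \<open>d \<noteq> 0\<close>, cancelling \<open>d\<close> in a Bezout identity \<open>d = x a' d + y b' d\<close>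
  gives \<open>x a' + y b' = 1\<close>, while \<open>b' \<in> (J : I)\<close> and \<open>a' \<in> (I : J)\<close>; if \<open>d = 0\<close>, then
  \<open>I = 0\<close> and \<open>(J : I)\<close> is the whole ring.\<close>

context cring
begin

lemma ideal_residual_ideal:
  assumes "ideal I R" "ideal J R"
  shows "ideal (ideal_residual R I J) R"
proof -
  have Icarr: "i \<in> carrier R" if "i \<in> I" for i
    using ideal.Icarr[OF assms(1) that] .
  interpret J: ideal J R by (rule assms(2))
  show ?thesis
  proof (rule idealI[OF ring_axioms])
    show "subgroup (ideal_residual R I J) (add_monoid R)"
      by (rule add.subgroupI)
        (auto simp: ideal_residual_def l_distr l_minus Icarr J.a_closed J.a_inv_closed)
    fix a x assume a: "a \<in> ideal_residual R I J" and x: "x \<in> carrier R"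
    then show xa: "x \<otimes> a \<in> ideal_residual R I J"
      by (auto simp: ideal_residual_def m_assoc Icarr J.I_l_closed)
    show "a \<otimes> x \<in> ideal_residual R I J"
      using xa a x by (simp add: ideal_residual_def m_comm)
  qed
qed

lemma ideal_prod_subset_iff_subset_residual:
  assumes "ideal I R" "ideal J R" "ideal K R"
  shows "I \<cdot> J \<subseteq> K \<longleftrightarrow> I \<subseteq> ideal_residual R J K"
proof
  assume "I \<cdot> J \<subseteq> K"
  then show "I \<subseteq> ideal_residual R J K"
    using ideal.Icarr[OF assms(1)] by (auto simp: ideal_residual_def intro: ideal_prod.prod)
next
  assume IJK: "I \<subseteq> ideal_residual R J K"
  show "I \<cdot> J \<subseteq> K"
  proof
    fix s assume "s \<in> I \<cdot> J"
    then show "s \<in> K"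
      by (induct s rule: ideal_prod.induct)
        (use IJK in \<open>auto simp: ideal_residual_def additive_subgroup.a_closed ideal.axioms(1) assms(3)\<close>)
  qed
qed

lemma set_add_ideals_upper:
  assumes "ideal I R" "ideal J R"
  shows "I \<subseteq> set_add R I J" "J \<subseteq> set_add R I J"
  using genideal_self[of "I \<union> J"] union_genideal[OF assms]
    ideal.Icarr[OF assms(1)] ideal.Icarr[OF assms(2)] by auto

lemma set_add_ideals_least:
  assumes "ideal I R" "ideal J R" "ideal K R" "I \<subseteq> K" "J \<subseteq> K"
  shows "set_add R I J \<subseteq> K"
  using genideal_minimal[OF assms(3), of "I \<union> J"] union_genideal[OF assms(1,2)] assms(4,5) by auto

lemma ideal_prod_carrier_left:
  assumes "ideal I R"
  shows "carrier R \<cdot> I = I"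
  using ideal_prod_commute[OF oneideal assms] ideal_prod_one[OF assms] by simp

lemma ideals_residuated_lattice:
  "residuated_lattice {I. ideal I R} (\<subseteq>) (\<inter>) (set_add R) (ideal_prod R) (ideal_residual R)
     {\<zero>} (carrier R)"
  unfolding residuated_lattice_def mem_Collect_eq
  by (intro conjI ballI allI impI; (simp only: mem_Collect_eq)?; (rule ideal_prod_commute; assumption)?)
    (auto simp: zeroideal oneideal i_intersect add_ideals ideal_prod_is_ideal ideal_residual_ideal
      set_add_ideals_upper set_add_ideals_least ideal_prod_assoc ideal_prod_carrier_left
      ideal_prod_subset_iff_subset_residual additive_subgroup.zero_closed ideal.axioms(1) ideal.Icarr)

lemma ideal_prod_residual_principal:
  assumes a: "a \<in> carrier R" and J: "ideal J R"
  shows "(PIdl a) \<cdot> ideal_residual R (PIdl a) J = PIdl a \<inter> J"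
proof
  have I: "ideal (PIdl a) R" and IJ: "ideal (ideal_residual R (PIdl a) J) R"
    using cgenideal_ideal[OF a] ideal_residual_ideal[OF _ J] by auto
  have "ideal_residual R (PIdl a) J \<cdot> (PIdl a) \<subseteq> J"
    using ideal_prod_subset_iff_subset_residual[OF IJ I J] by simp
  then show "(PIdl a) \<cdot> ideal_residual R (PIdl a) J \<subseteq> PIdl a \<inter> J"
    using ideal_prod_inter[OF I IJ] ideal_prod_commute[OF I IJ] by auto
next
  show "PIdl a \<inter> J \<subseteq> (PIdl a) \<cdot> ideal_residual R (PIdl a) J"
  proof
    fix x assume x: "x \<in> PIdl a \<inter> J"
    then obtain r where r: "r \<in> carrier R" "x = r \<otimes> a"
      unfolding cgenideal_def by auto
    have "r \<otimes> (s \<otimes> a) = s \<otimes> x" if "s \<in> carrier R" for s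
      using that r a by (simp add: m_lcomm)
    then have "r \<in> ideal_residual R (PIdl a) J"
      using r(1) x ideal.I_l_closed[OF J] by (auto simp: ideal_residual_def cgenideal_def)
    moreover have "x = a \<otimes> r"
      using r a by (simp add: m_comm)
    ultimately show "x \<in> (PIdl a) \<cdot> ideal_residual R (PIdl a) J"
      using cgenideal_self[OF a] by (simp add: ideal_prod.prod)
  qed
qed

lemma ideal_residual_zero:
  assumes "ideal J R"
  shows "ideal_residual R {\<zero>} J = carrier R"
  using additive_subgroup.zero_closed[OF ideal.axioms(1)[OF assms]]
  by (auto simp: ideal_residual_def)

lemma cofactor_mem_ideal_residual:
  assumes "a \<in> carrier R" "b \<in> carrier R" "d \<in> carrier R"
  shows "b \<in> ideal_residual R (PIdl (a \<otimes> d)) (PIdl (b \<otimes> d))"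
proof -
  have "b \<otimes> (s \<otimes> (a \<otimes> d)) = (s \<otimes> a) \<otimes> (b \<otimes> d)" if "s \<in> carrier R" for s
    using that assms by algebra
  then show ?thesis
    using assms by (auto simp: ideal_residual_def cgenideal_def)
qed

lemma ideal_residual_principal_prelinear:
  assumes "a \<in> carrier R" "b \<in> carrier R" "d \<in> carrier R" "x \<in> carrier R" "y \<in> carrier R"
    and "x \<otimes> a \<oplus> y \<otimes> b = \<one>"
  shows "set_add R (ideal_residual R (PIdl (a \<otimes> d)) (PIdl (b \<otimes> d)))
           (ideal_residual R (PIdl (b \<otimes> d)) (PIdl (a \<otimes> d))) = carrier R"
    (is "set_add R ?JI ?IJ = _")
proof -
  have res: "ideal ?JI R" "ideal ?IJ R"
    using ideal_residual_ideal cgenideal_ideal assms(1-3) by simp_all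
  have "y \<otimes> b \<in> ?JI" "x \<otimes> a \<in> ?IJ"
    using cofactor_mem_ideal_residual[of a b d] cofactor_mem_ideal_residual[of b a d] assms(1-5)
      ideal.I_l_closed[OF res(1)] ideal.I_l_closed[OF res(2)] by simp_all
  then have "y \<otimes> b \<oplus> x \<otimes> a \<in> set_add R ?JI ?IJ"
    unfolding set_add_def' by blast
  moreover have "y \<otimes> b \<oplus> x \<otimes> a = \<one>"
    using assms a_comm[of "x \<otimes> a" "y \<otimes> b"] by simp
  ultimately show ?thesis
    using ideal.one_imp_carrier[OF add_ideals[OF res]] by simp
qed

end

lemma (in domain) bezout_cofactors_sum_eq_one:
  assumes "a \<in> carrier R" "b \<in> carrier R" "x \<in> carrier R" "y \<in> carrier R"
    and "d \<in> carrier R" "d \<noteq> \<zero>"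
    and "d = x \<otimes> (a \<otimes> d) \<oplus> y \<otimes> (b \<otimes> d)"
  shows "x \<otimes> a \<oplus> y \<otimes> b = \<one>"
proof -
  have "(x \<otimes> a \<oplus> y \<otimes> b) \<otimes> d = \<one> \<otimes> d"
    using assms by (simp add: l_distr m_assoc)
  moreover have "x \<otimes> a \<oplus> y \<otimes> b \<in> carrier R"
    using assms by simp
  ultimately show ?thesis
    using m_rcancel[OF assms(6,5) _ one_closed] by blast
qed

lemma (in principal_domain) ideal_residual_prelinear:
  assumes I: "ideal I R" and J: "ideal J R"
  shows "set_add R (ideal_residual R I J) (ideal_residual R J I) = carrier R"
proof -
  obtain a b where a: "a \<in> carrier R" "I = PIdl a" and b: "b \<in> carrier R" "J = PIdl b"
    using exists_gen I J by meson
  obtain d where d: "d \<in> carrier R" "set_add R I J = PIdl d"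
    using exists_gen[OF add_ideals[OF I J]] by blast
  have "a \<in> PIdl d" "b \<in> PIdl d"
    using set_add_ideals_upper[OF I J] a b cgenideal_self d(2) by auto
  then obtain a' b' where a': "a' \<in> carrier R" "a = a' \<otimes> d" and b': "b' \<in> carrier R" "b = b' \<otimes> d"
    unfolding cgenideal_def by auto
  show ?thesis
  proof (cases "d = \<zero>")
    case True
    have res: "ideal (ideal_residual R I J) R" "ideal (ideal_residual R J I) R"
      using ideal_residual_ideal I J by auto
    from True have "I = {\<zero>}"
      using a a' genideal_zero cgenideal_eq_genideal[OF zero_closed] by simp
    then have "ideal_residual R I J = carrier R"
      using ideal_residual_zero[OF J] by simp
    then show ?thesis
      using set_add_ideals_upper(1)[OF res] ideal.Icarr[OF add_ideals[OF res]] by blast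
  next
    case False
    have "d \<in> set_add R (PIdl a) (PIdl b)"
      using cgenideal_self[OF d(1)] d(2) a(2) b(2) by simp
    then obtain x y where xy: "x \<in> carrier R" "y \<in> carrier R" "d = x \<otimes> a \<oplus> y \<otimes> b"
      unfolding set_add_def' cgenideal_def by auto
    have "x \<otimes> a' \<oplus> y \<otimes> b' = \<one>"
      using bezout_cofactors_sum_eq_one[OF a'(1) b'(1) xy(1,2) d(1) False xy(3)[unfolded a'(2) b'(2)]] .
    then show ?thesis
      using ideal_residual_principal_prelinear[OF a'(1) b'(1) d(1) xy(1,2)]
      unfolding a(2) b(2) a'(2) b'(2) by simp
  qed
qed

lemma (in principal_domain) is_BL_ring: "BL_ring R"
proof -
  have "I \<cdot> ideal_residual R I J = I \<inter> J" if "ideal I R" "ideal J R" for I J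
    using exists_gen[OF that(1)] ideal_prod_residual_principal[OF _ that(2)] by blast
  then show ?thesis
    unfolding BL_ring_def BL_algebra_def
    using is_cring ideals_residuated_lattice ideal_residual_prelinear by simp
qed

theorem theorem3p7:
  fixes A :: "('a, 'b) ring_scheme"
  assumes "principal_domain A"
  shows "BL_ring A"
  using principal_domain.is_BL_ring[OF assms] .

end
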